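(* Let $\beta_1,\dots,\beta_d$ be fixed positive reals and let $c>0$ satisfy $c\le\sum_{i=1}^d\beta_i$. Over positive reals $\alpha_1,\dots,\alpha_d$ with $\sum_{i=1}^d\alpha_i=c$, the minimum of $$f(\alpha_1,\dots,\alpha_d)=\sum_{i=1}^d\frac{\beta_i}{\alpha_i}+\sum_{i=1}^d\ln\alpha_i$$ is achieved at $\alpha_i^*=\frac{\sqrt{1-4\lambda^*\beta_i}-1}{-2\lambda^*}$, where $\lambda^*\le0$ is the unique solution of $\sum_{i=1}^d\frac{2\beta_i}{1+\sqrt{1-4\lambda^*\beta_i}}=c$. *)

theory Defs
  imports Complex_Main
begin

definition obj :: "nat \<Rightarrow> (nat \<Rightarrow> real) \<Rightarrow> (nat \<Rightarrow> real) \<Rightarrow> real" where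
  "obj d \<beta> \<alpha> = (\<Sum>i=1..d. \<beta> i / \<alpha> i) + (\<Sum>i=1..d. ln (\<alpha> i))"

text \<open>alpha_i^* = (sqrt(1 - 4 lam beta_i) - 1)/(-2 lam); at lam = 0 the formula is
  read as its limit beta_i (the value of 2 beta_i/(1 + sqrt(1 - 4 lam beta_i))).\<close>
definition alpha_star :: "real \<Rightarrow> real \<Rightarrow> real" where
  "alpha_star lam b = (if lam = 0 then b else (sqrt (1 - 4 * lam * b) - 1) / (- 2 * lam))"

end

theory Submission
  imports Defs "HOL-Real_Asymp.Real_Asymp"
begin

text \<open>For \<open>\<lambda> \<le> 0\<close> the Lagrangian \<open>f(\<alpha>) - \<lambda> \<Sum>\<alpha>\<^sub>i\<close> separates into the terms
  \<open>\<beta>\<^sub>i/a + ln a - \<lambda> a\<close>, each minimised over \<open>a > 0\<close> at the positive root \<open>\<alpha>\<^sub>i\<^sup>*\<close> of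
  \<open>a - \<lambda> a\<^sup>2 = \<beta>\<^sub>i\<close>, and \<open>\<alpha>\<^sup>*\<close> minimises \<open>f\<close> on the simplex as soon as \<open>\<Sum>\<alpha>\<^sub>i\<^sup>* = c\<close>.
  Written as \<open>2\<beta>\<^sub>i/(1 + sqrt(1 - 4\<lambda>\<beta>\<^sub>i))\<close>, each \<open>\<alpha>\<^sub>i\<^sup>*\<close> increases strictly in \<open>\<lambda>\<close> from \<open>0\<close>
  at \<open>-\<infinity>\<close> to \<open>\<beta>\<^sub>i\<close> at \<open>\<lambda> = 0\<close>, so by the intermediate value theorem \<open>\<Sum>\<alpha>\<^sub>i\<^sup>* = c\<close>
  has exactly one solution \<open>\<lambda>\<^sup>* \<le> 0\<close>.\<close>

lemma one_le_one_minus_four_mult: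
  fixes l b :: real
  assumes "l \<le> 0" "b \<ge> 0"
  shows "1 \<le> 1 - 4 * l * b"
  using mult_nonpos_nonneg[of "4 * l" b] assms by simp

lemma one_le_sqrt_one_minus:
  fixes l b :: real
  assumes "l \<le> 0" "b \<ge> 0"
  shows "1 \<le> sqrt (1 - 4 * l * b)"
  using one_le_one_minus_four_mult[OF assms] by (rule real_sqrt_ge_one)

lemma one_plus_sqrt_one_minus_pos:
  fixes l b :: real
  assumes "l \<le> 0" "b \<ge> 0"
  shows "0 < 1 + sqrt (1 - 4 * l * b)"
  using one_le_sqrt_one_minus[OF assms] by linarith

lemma alpha_star_eq:
  fixes l b :: real
  assumes "l \<le> 0" "b \<ge> 0"
  shows "alpha_star l b = 2 * b / (1 + sqrt (1 - 4 * l * b))"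
proof (cases "l = 0")
  case True
  then show ?thesis by (simp add: alpha_star_def)
next
  case False
  define s where "s = sqrt (1 - 4 * l * b)"
  have "s \<ge> 1" unfolding s_def using one_le_sqrt_one_minus[OF assms] .
  moreover have "s\<^sup>2 = 1 - 4 * l * b"
    unfolding s_def using one_le_one_minus_four_mult[OF assms] by (intro real_sqrt_pow2) linarith
  ultimately have "(s - 1) / (- 2 * l) = 2 * b / (1 + s)"
    using False by (simp add: field_simps power2_eq_square)
  then show ?thesis using False by (simp add: alpha_star_def s_def)
qed

lemma alpha_star_pos:
  fixes l b :: real
  assumes "l \<le> 0" "b > 0"
  shows "alpha_star l b > 0"
proof -
  have "0 < 1 + sqrt (1 - 4 * l * b)" using assms by (intro one_plus_sqrt_one_minus_pos) auto
  then show ?thesis using alpha_star_eq[of l b] assms by simp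
qed

lemma alpha_star_root:
  fixes l b :: real
  assumes "l \<le> 0" "b \<ge> 0"
  shows "alpha_star l b - l * (alpha_star l b)\<^sup>2 = b"
proof -
  define u where "u = 1 + sqrt (1 - 4 * l * b)"
  have "u \<noteq> 0" unfolding u_def using one_plus_sqrt_one_minus_pos[OF assms] by simp
  have "(u - 1)\<^sup>2 = 1 - 4 * l * b"
  proof -
    have "0 \<le> 1 - 4 * l * b" using one_le_one_minus_four_mult[OF assms] by linarith
    then show ?thesis unfolding u_def by (simp del: real_sqrt_ge_0_iff)
  qed
  then have quadratic: "4 * l * b = 2 * u - u\<^sup>2" by (simp add: power2_eq_square algebra_simps)
  have "l * (2 * b)\<^sup>2 = b * (4 * l * b)" by (simp add: power2_eq_square)
  also have "\<dots> = b * (2 * u - u\<^sup>2)" by (simp only: quadratic)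
  finally have "l * (2 * b)\<^sup>2 = b * (2 * u - u\<^sup>2)" .
  then have numerator: "2 * b * u - l * (2 * b)\<^sup>2 = b * u\<^sup>2" by (simp add: algebra_simps)
  have "2 * b / u - l * (2 * b / u)\<^sup>2 = (2 * b * u - l * (2 * b)\<^sup>2) / u\<^sup>2"
    using \<open>u \<noteq> 0\<close> by (simp add: field_simps power2_eq_square)
  also have "\<dots> = b" unfolding numerator using \<open>u \<noteq> 0\<close> by simp
  finally show ?thesis using alpha_star_eq[OF assms] by (simp add: u_def)
qed

text \<open>The stationarity condition of \<open>a \<mapsto> b/a + ln a - l a\<close> is \<open>a - l a\<^sup>2 = b\<close>; the
  comparison uses \<open>ln (a/x) \<ge> 1 - x/a\<close> and leaves the remainder \<open>-l (x - a)\<^sup>2 / a \<ge> 0\<close>.\<close>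

lemma stationary_point_minimises:
  fixes l b x a :: real
  assumes "l \<le> 0" "x > 0" "a > 0" and stationary: "x - l * x\<^sup>2 = b"
  shows "b / x + ln x - l * x \<le> b / a + ln a - l * a"
proof -
  have "ln (x / a) \<le> x / a - 1" using assms by (intro ln_le_minus_one) auto
  then have ln_bound: "ln a - ln x \<ge> 1 - x / a" using assms by (simp add: ln_div)
  have "b / a - b / x + (1 - x / a) - l * (a - x) = - l * (x - a)\<^sup>2 / a"
    using assms by (simp add: stationary[symmetric] field_simps power2_eq_square)
  moreover have "- l * (x - a)\<^sup>2 / a \<ge> 0" using assms by (intro divide_nonneg_pos mult_nonneg_nonneg) auto
  ultimately show ?thesis using ln_bound by (simp add: algebra_simps)
qed

lemma alpha_star_minimises_on_simplex:
  fixes I :: "'i set" and \<beta> \<alpha> :: "'i \<Rightarrow> real" and l :: real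
  assumes "finite I" "l \<le> 0" "\<forall>i\<in>I. \<beta> i > 0" "\<forall>i\<in>I. \<alpha> i > 0"
    and same_sum: "(\<Sum>i\<in>I. \<alpha> i) = (\<Sum>i\<in>I. alpha_star l (\<beta> i))"
  shows "(\<Sum>i\<in>I. \<beta> i / alpha_star l (\<beta> i)) + (\<Sum>i\<in>I. ln (alpha_star l (\<beta> i)))
    \<le> (\<Sum>i\<in>I. \<beta> i / \<alpha> i) + (\<Sum>i\<in>I. ln (\<alpha> i))"
proof -
  let ?x = "\<lambda>i. alpha_star l (\<beta> i)"
  have "(\<Sum>i\<in>I. \<beta> i / ?x i + ln (?x i) - l * ?x i) \<le> (\<Sum>i\<in>I. \<beta> i / \<alpha> i + ln (\<alpha> i) - l * \<alpha> i)"
    using assms by (intro sum_mono stationary_point_minimises alpha_star_pos alpha_star_root) auto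
  then show ?thesis
    using same_sum by (simp add: sum.distrib sum_subtractf sum_distrib_left[symmetric])
qed

lemma strict_mono_on_alpha_star_rationalized:
  fixes b :: real
  assumes "b > 0"
  shows "strict_mono_on {..0} (\<lambda>l. 2 * b / (1 + sqrt (1 - 4 * l * b)))"
proof (rule strict_mono_onI)
  fix l1 l2 :: real
  assume "l1 \<in> {..0}" "l2 \<in> {..0}" "l1 < l2"
  moreover from this have "sqrt (1 - 4 * l2 * b) < sqrt (1 - 4 * l1 * b)"
    using assms by (simp add: mult_strict_right_mono)
  moreover have "0 < 1 + sqrt (1 - 4 * l1 * b)" "0 < 1 + sqrt (1 - 4 * l2 * b)"
    using calculation assms by (auto intro!: one_plus_sqrt_one_minus_pos)
  ultimately show "2 * b / (1 + sqrt (1 - 4 * l1 * b)) < 2 * b / (1 + sqrt (1 - 4 * l2 * b))"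
    using assms by (intro divide_strict_left_mono) auto
qed

lemma alpha_star_rationalized_tendsto_at_bot:
  fixes b :: real
  assumes "b > 0"
  shows "((\<lambda>l. 2 * b / (1 + sqrt (1 - 4 * l * b))) \<longlongrightarrow> 0) at_bot"
  using assms by real_asymp

lemma ex1_value_strict_mono_on_atMost:
  fixes f :: "real \<Rightarrow> real"
  assumes "continuous_on {..b} f" "strict_mono_on {..b} f" "(f \<longlongrightarrow> y\<^sub>0) at_bot"
    and "y\<^sub>0 < y" "y \<le> f b"
  shows "\<exists>!x. x \<le> b \<and> f x = y"
proof -
  have "\<forall>\<^sub>F x in at_bot. f x < y" using assms(3,4) by (rule order_tendstoD)
  then obtain L where L: "\<And>x. x \<le> L \<Longrightarrow> f x < y" by (auto simp: eventually_at_bot_linorder)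
  define a where "a = min L b"
  have "continuous_on {a..b} f" using assms(1) by (rule continuous_on_subset) auto
  moreover have "f a \<le> y" "a \<le> b" using L[of a] by (auto simp: a_def)
  ultimately obtain x where "x \<le> b" "f x = y" using IVT'[of f a y b] assms(5) by auto
  moreover have "inj_on f {..b}" using assms(2) by (rule strict_mono_on_imp_inj_on)
  ultimately show ?thesis by (auto dest: inj_onD)
qed

lemma ex1_lagrange_multiplier:
  fixes I :: "'i set" and \<beta> :: "'i \<Rightarrow> real" and c :: real
  assumes "finite I" "\<forall>i\<in>I. \<beta> i > 0" "c > 0" "c \<le> (\<Sum>i\<in>I. \<beta> i)"
  shows "\<exists>!lam. lam \<le> 0 \<and> (\<Sum>i\<in>I. 2 * \<beta> i / (1 + sqrt (1 - 4 * lam * \<beta> i))) = c"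
proof (rule ex1_value_strict_mono_on_atMost)
  have "1 + sqrt (1 - 4 * lam * \<beta> i) \<noteq> 0" if "i \<in> I" "lam \<le> 0" for i lam
    using assms(2) that one_plus_sqrt_one_minus_pos[of lam "\<beta> i"] by auto
  then show "continuous_on {..0} (\<lambda>lam. \<Sum>i\<in>I. 2 * \<beta> i / (1 + sqrt (1 - 4 * lam * \<beta> i)))"
    by (intro continuous_intros) auto
  have "I \<noteq> {}" using assms(3,4) by auto
  then show "strict_mono_on {..0} (\<lambda>lam. \<Sum>i\<in>I. 2 * \<beta> i / (1 + sqrt (1 - 4 * lam * \<beta> i)))"
    using assms(1,2) strict_mono_on_alpha_star_rationalized
    by (auto intro!: strict_mono_onI sum_strict_mono dest: strict_mono_onD)
  show "((\<lambda>lam. \<Sum>i\<in>I. 2 * \<beta> i / (1 + sqrt (1 - 4 * lam * \<beta> i))) \<longlongrightarrow> (\<Sum>i\<in>I. 0)) at_bot"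
    using assms(2) by (intro tendsto_sum alpha_star_rationalized_tendsto_at_bot) auto
qed (use assms(3,4) in simp_all)

theorem lemma11:
  fixes d :: nat and \<beta> :: "nat \<Rightarrow> real" and c :: real
  assumes "\<forall>i\<in>{1..d}. \<beta> i > 0"
    and "c > 0"
    and "c \<le> (\<Sum>i=1..d. \<beta> i)"
  shows "(\<exists>!lam. lam \<le> 0 \<and> (\<Sum>i=1..d. 2 * \<beta> i / (1 + sqrt (1 - 4 * lam * \<beta> i))) = c)
    \<and> (\<forall>lam. lam \<le> 0 \<and> (\<Sum>i=1..d. 2 * \<beta> i / (1 + sqrt (1 - 4 * lam * \<beta> i))) = c \<longrightarrow>
          (\<forall>i\<in>{1..d}. alpha_star lam (\<beta> i) > 0)
        \<and> (\<Sum>i=1..d. alpha_star lam (\<beta> i)) = c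
        \<and> (\<forall>\<alpha>. (\<forall>i\<in>{1..d}. \<alpha> i > 0) \<and> (\<Sum>i=1..d. \<alpha> i) = c \<longrightarrow>
               obj d \<beta> (\<lambda>i. alpha_star lam (\<beta> i)) \<le> obj d \<beta> \<alpha>))"
proof (intro conjI allI impI)
  show "\<exists>!lam. lam \<le> 0 \<and> (\<Sum>i=1..d. 2 * \<beta> i / (1 + sqrt (1 - 4 * lam * \<beta> i))) = c"
    using assms by (intro ex1_lagrange_multiplier) auto
next
  fix lam
  assume lam: "lam \<le> 0 \<and> (\<Sum>i=1..d. 2 * \<beta> i / (1 + sqrt (1 - 4 * lam * \<beta> i))) = c"
  then show "\<forall>i\<in>{1..d}. alpha_star lam (\<beta> i) > 0"
    using assms(1) alpha_star_pos by blast
  show sum_alpha_star: "(\<Sum>i=1..d. alpha_star lam (\<beta> i)) = c"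
    using lam assms(1) alpha_star_eq by (metis (no_types, lifting) less_imp_le sum.cong)
  fix \<alpha> :: "nat \<Rightarrow> real"
  assume "(\<forall>i\<in>{1..d}. \<alpha> i > 0) \<and> (\<Sum>i=1..d. \<alpha> i) = c"
  then show "obj d \<beta> (\<lambda>i. alpha_star lam (\<beta> i)) \<le> obj d \<beta> \<alpha>"
    unfolding obj_def using lam assms(1) sum_alpha_star
    by (intro alpha_star_minimises_on_simplex) auto
qed

end
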